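(* Let $F:\mathbb R^d\to\mathbb R$ be continuously differentiable with $\|\nabla F(x)-\nabla F(y)\|\le(K_0+K_1\|\nabla F(x)\|)\|x-y\|$ for all $x,y$. Let $\gamma>0$, let $\{m_t\}$ be an arbitrary sequence of nonzero vectors, and let $w_{t+1}=w_t-\gamma\, m_{t+1}/\|m_{t+1}\|$ starting from $w_0$. Define $\delta_t=m_{t+1}-\nabla F(w_t)$. Then for every $t$, $$F(w_{t+1})-F(w_t)\le-\Big(\gamma-\tfrac12K_1\gamma^2\Big)\|\nabla F(w_t)\|+\tfrac12K_0\gamma^2+2\gamma\|\delta_t\|,$$ and consequently, for every $T\ge1$, $$\Big(1-\tfrac12K_1\gamma\Big)\sum_{t=0}^{T-1}\|\nabla F(w_t)\|\le\frac{F(w_0)-F(w_T)}{\gamma}+\tfrac12K_0T\gamma+2\sum_{t=0}^{T-1}\|\delta_t\|.$$ *)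

theory Defs
  imports "HOL-Analysis.Analysis"
begin

end

theory Submission
  imports Defs
begin

text \<open>Along the segment from \<open>w\<^sub>t\<close> to \<open>w\<^sub>t\<^sub>+\<^sub>1\<close> the smoothness condition makes the gradient
  Lipschitz at the base point with constant \<open>K0 + K1 \<parallel>\<nabla>F(w\<^sub>t)\<parallel>\<close>, so \<open>F\<close> lies below the
  quadratic model \<open>F(w\<^sub>t) + \<nabla>F(w\<^sub>t)\<cdot>d + (K0 + K1 \<parallel>\<nabla>F(w\<^sub>t)\<parallel>) \<parallel>d\<parallel>\<^sup>2 / 2\<close>. The step \<open>d\<close> has
  length \<open>\<gamma>\<close> and direction \<open>m\<^sub>t\<^sub>+\<^sub>1\<close>, and the gradient's component along that direction is at
  least \<open>\<parallel>\<nabla>F(w\<^sub>t)\<parallel> - 2 \<parallel>\<delta>\<^sub>t\<parallel>\<close>. Summing the one-step bounds telescopes the values of \<open>F\<close>.\<close>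

lemma descent_lemma:
  fixes F :: "'a::real_inner \<Rightarrow> real"
  assumes grad: "\<And>y. (F has_derivative (\<lambda>h. gradF y \<bullet> h)) (at y)"
    and lipschitz_at: "\<And>y. norm (gradF y - gradF x) \<le> L * norm (y - x)"
  shows "F (x + d) - F x \<le> gradF x \<bullet> d + L * norm d ^ 2 / 2"
proof -
  define C where "C = L * norm d ^ 2"
  define \<phi> where "\<phi> s = F (x + s *\<^sub>R d) - s * (gradF x \<bullet> d) - C * s^2 / 2" for s
  have \<phi>_deriv: "(\<phi> has_real_derivative (gradF (x + s *\<^sub>R d) - gradF x) \<bullet> d - C * s) (at s)"
    for s
  proof -
    have "((\<lambda>s. x + s *\<^sub>R d) has_derivative (\<lambda>h. h *\<^sub>R d)) (at s)"
      by (auto intro!: derivative_eq_intros)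
    from has_derivative_compose[OF this grad]
    have F_deriv: "((\<lambda>s. F (x + s *\<^sub>R d)) has_real_derivative gradF (x + s *\<^sub>R d) \<bullet> d) (at s)"
      by (simp add: has_field_derivative_def mult.commute[of _ "gradF (x + s *\<^sub>R d) \<bullet> d"])
    show ?thesis
      unfolding \<phi>_def inner_diff_left by (rule derivative_eq_intros F_deriv | simp)+
  qed
  have \<phi>_deriv_nonpos: "(gradF (x + s *\<^sub>R d) - gradF x) \<bullet> d - C * s \<le> 0" if "0 \<le> s" for s
  proof -
    have "(gradF (x + s *\<^sub>R d) - gradF x) \<bullet> d \<le> norm (gradF (x + s *\<^sub>R d) - gradF x) * norm d"
      by (rule norm_cauchy_schwarz)
    also have "\<dots> \<le> L * (s * norm d) * norm d"
      using lipschitz_at[of "x + s *\<^sub>R d"] that by (simp add: mult_right_mono)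
    finally show ?thesis
      by (simp add: C_def power2_eq_square algebra_simps)
  qed
  have "\<phi> 1 \<le> \<phi> 0"
  proof (rule DERIV_nonpos_imp_nonincreasing[of 0 1 \<phi>])
    show "\<exists>y. DERIV \<phi> s :> y \<and> y \<le> 0" if "0 \<le> s" "s \<le> 1" for s
      using \<phi>_deriv \<phi>_deriv_nonpos[OF \<open>0 \<le> s\<close>] by blast
  qed simp
  then show ?thesis
    by (simp add: \<phi>_def C_def)
qed

lemma inner_sgn_ge:
  fixes g m :: "'a::real_inner"
  shows "norm g - 2 * norm (m - g) \<le> g \<bullet> sgn m"
proof (cases "m = 0")
  case False
  have "m \<bullet> sgn m = norm m"
    using False by (simp add: sgn_div_norm power2_eq_square flip: power2_norm_eq_inner)
  moreover have "(m - g) \<bullet> sgn m \<le> norm (m - g)"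
    using norm_cauchy_schwarz[of "m - g" "sgn m"] False by (simp add: norm_sgn)
  moreover have "norm g \<le> norm m + norm (m - g)"
    using norm_triangle_ineq4[of m "m - g"] by simp
  ultimately show ?thesis
    by (simp add: inner_diff_left)
qed simp

lemma normalized_step_descent:
  fixes F :: "'a::real_inner \<Rightarrow> real"
  assumes grad: "\<And>y. (F has_derivative (\<lambda>h. gradF y \<bullet> h)) (at y)"
    and smooth: "\<And>y. norm (gradF w - gradF y) \<le> (K0 + K1 * norm (gradF w)) * norm (w - y)"
    and "\<gamma> \<ge> 0" and "m \<noteq> 0"
  shows "F (w - \<gamma> *\<^sub>R sgn m) - F w
           \<le> - (\<gamma> - K1 * \<gamma>^2 / 2) * norm (gradF w) + K0 * \<gamma>^2 / 2
              + 2 * \<gamma> * norm (m - gradF w)"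
proof -
  let ?g = "gradF w" and ?L = "K0 + K1 * norm (gradF w)"
  have "F (w - \<gamma> *\<^sub>R sgn m) - F w = F (w + (- \<gamma> *\<^sub>R sgn m)) - F w"
    by simp
  also have "\<dots> \<le> ?g \<bullet> (- \<gamma> *\<^sub>R sgn m) + ?L * norm (- \<gamma> *\<^sub>R sgn m) ^ 2 / 2"
    by (rule descent_lemma[OF grad]) (use smooth in \<open>simp add: norm_minus_commute\<close>)
  also have "\<dots> = - \<gamma> * (?g \<bullet> sgn m) + ?L * \<gamma> ^ 2 / 2"
    using \<open>\<gamma> \<ge> 0\<close> \<open>m \<noteq> 0\<close> by (simp add: norm_sgn)
  also have "\<dots> \<le> - \<gamma> * (norm ?g - 2 * norm (m - ?g)) + ?L * \<gamma> ^ 2 / 2"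
    using inner_sgn_ge[of ?g m] \<open>\<gamma> \<ge> 0\<close> by (simp add: mult_left_mono)
  finally show ?thesis
    by (simp add: algebra_simps add_divide_distrib)
qed

lemma descent_sum_bound:
  fixes f a e :: "nat \<Rightarrow> real"
  assumes "\<gamma> > 0"
    and step: "\<And>t. f (Suc t) - f t \<le> - (\<gamma> - K1 * \<gamma>^2 / 2) * a t + K0 * \<gamma>^2 / 2 + 2 * \<gamma> * e t"
  shows "(1 - K1 * \<gamma> / 2) * (\<Sum>t<T. a t)
           \<le> (f 0 - f T) / \<gamma> + K0 * real T * \<gamma> / 2 + 2 * (\<Sum>t<T. e t)"
proof -
  have "f T - f 0 = (\<Sum>t<T. f (Suc t) - f t)"
    by (simp add: sum_lessThan_telescope)
  also have "\<dots> \<le> (\<Sum>t<T. - (\<gamma> - K1 * \<gamma>^2 / 2) * a t + K0 * \<gamma>^2 / 2 + 2 * \<gamma> * e t)"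
    by (intro sum_mono step)
  also have "\<dots> = - (\<gamma> - K1 * \<gamma>^2 / 2) * (\<Sum>t<T. a t) + real T * (K0 * \<gamma>^2 / 2)
                    + 2 * \<gamma> * (\<Sum>t<T. e t)"
    by (simp add: sum.distrib sum_distrib_left)
  also have "\<dots> = \<gamma> * (- (1 - K1 * \<gamma> / 2) * (\<Sum>t<T. a t) + K0 * real T * \<gamma> / 2
                         + 2 * (\<Sum>t<T. e t))"
    by (simp add: algebra_simps power2_eq_square)
  finally show ?thesis
    using \<open>\<gamma> > 0\<close> by (simp add: field_simps)
qed

theorem lemma3p8:
  fixes F :: "real ^ 'd \<Rightarrow> real"
    and gradF :: "real ^ 'd \<Rightarrow> real ^ 'd"
    and K0 K1 \<gamma> :: real
    and m w :: "nat \<Rightarrow> real ^ 'd"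
  assumes grad: "\<And>x. (F has_derivative (\<lambda>h. gradF x \<bullet> h)) (at x)"
    and cont: "continuous_on UNIV gradF"
    and smooth: "\<And>x y. norm (gradF x - gradF y) \<le> (K0 + K1 * norm (gradF x)) * norm (x - y)"
    and gamma_pos: "\<gamma> > 0"
    and m_nz: "\<And>t. m t \<noteq> 0"
    and w_step: "\<And>t. w (Suc t) = w t - (\<gamma> / norm (m (Suc t))) *\<^sub>R m (Suc t)"
  shows "(\<forall>t. F (w (Suc t)) - F (w t)
            \<le> - (\<gamma> - K1 * \<gamma>^2 / 2) * norm (gradF (w t)) + K0 * \<gamma>^2 / 2
               + 2 * \<gamma> * norm (m (Suc t) - gradF (w t)))
       \<and> (\<forall>T\<ge>1. (1 - K1 * \<gamma> / 2) * (\<Sum>t<T. norm (gradF (w t)))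
            \<le> (F (w 0) - F (w T)) / \<gamma> + K0 * real T * \<gamma> / 2
               + 2 * (\<Sum>t<T. norm (m (Suc t) - gradF (w t))))"
proof -
  have step: "F (w (Suc t)) - F (w t)
            \<le> - (\<gamma> - K1 * \<gamma>^2 / 2) * norm (gradF (w t)) + K0 * \<gamma>^2 / 2
               + 2 * \<gamma> * norm (m (Suc t) - gradF (w t))" for t
  proof -
    have "w (Suc t) = w t - \<gamma> *\<^sub>R sgn (m (Suc t))"
      by (simp add: w_step sgn_div_norm divide_inverse_commute)
    then show ?thesis
      using normalized_step_descent[OF grad smooth] gamma_pos m_nz by simp
  qed
  then show ?thesis
    using descent_sum_bound[where f = "\<lambda>t. F (w t)" and a = "\<lambda>t. norm (gradF (w t))"
        and e = "\<lambda>t. norm (m (Suc t) - gradF (w t))", OF gamma_pos step] by blast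
qed

end
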